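(* Let $p\in(0,1)$, $\gamma>0$, $B>0$, $w\in\mathbb{N}$, for each $N\in\mathbb{N}$ let $(\xi_j^{(N)*})_{j=1}^N$ be the unique maximizer of $\mathcal{T}_N$, and let $B^{(N)}=B-\sum_{i=1}^N\xi_i^{(N)*}$. Then $(B^{(N)})_{N\ge1}$ is strictly decreasing in $N$.
   Context: Logarithms are base 2. For an admissible (nonnegative, with sum at most $B$) sequence $(x_j)_{j\ge1}$, $$\mathcal{T}_\infty(x_1,x_2,\dots)=\sum_{k=1}^{w}p^2(1-p)^{k-1}\frac{k}{2}\log_2\!\Big(1+\gamma\frac{B}{k}\Big)+\sum_{j=1}^{\infty}p(1-p)^{j+w-1}\frac12\log_2(1+\gamma x_j)+\sum_{k=1}^{\infty}p^2(1-p)^{k+w-1}\frac{w}{2}\log_2\!\Big(1+\gamma\frac{B-\sum_{j=1}^{k}x_j}{w}\Big).$$ For $N\in\mathbb{N}$ and $\xi_1,\dots,\xi_N\ge0$ with $\sum_{j=1}^N\xi_j\le B$, define $\mathcal{T}_N(\xi_1,\dots,\xi_N)=\mathcal{T}_\infty(\xi_1,\dots,\xi_N,0,0,\dots)$. $\mathcal{T}_N$ has a unique maximizer over this compact set, denoted $(\xi_j^{(N)*})_{j=1}^N$. *)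

theory Defs
  imports "HOL-Analysis.Analysis"
begin

text \<open>Sequences are functions nat => real indexed from 1 (value at 0 is irrelevant).
  Logarithms are base 2.\<close>

definition T_inf :: "real \<Rightarrow> real \<Rightarrow> real \<Rightarrow> nat \<Rightarrow> (nat \<Rightarrow> real) \<Rightarrow> real" where
  "T_inf p \<gamma> B w x =
     (\<Sum>k=1..w. p^2 * (1-p)^(k-1) * (real k / 2) * log 2 (1 + \<gamma> * B / real k))
   + (\<Sum>i. (\<lambda>j. p * (1-p)^(j+w-1) * (1/2) * log 2 (1 + \<gamma> * x j)) (i+1))
   + (\<Sum>i. (\<lambda>k. p^2 * (1-p)^(k+w-1) * (real w / 2)
            * log 2 (1 + \<gamma> * (B - (\<Sum>j=1..k. x j)) / real w)) (i+1))"

definition T_N :: "real \<Rightarrow> real \<Rightarrow> real \<Rightarrow> nat \<Rightarrow> nat \<Rightarrow> (nat \<Rightarrow> real) \<Rightarrow> real" where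
  "T_N p \<gamma> B w N \<xi> = T_inf p \<gamma> B w (\<lambda>j. if 1 \<le> j \<and> j \<le> N then \<xi> j else 0)"

text \<open>Feasible set for T_N: nonnegative entries xi_1..xi_N with sum at most B;
  entries outside 1..N are normalized to 0 so that the maximizer is unique as a function.\<close>
definition feasible_N :: "real \<Rightarrow> nat \<Rightarrow> (nat \<Rightarrow> real) set" where
  "feasible_N B N = {\<xi>. (\<forall>j\<in>{1..N}. 0 \<le> \<xi> j) \<and> (\<Sum>j=1..N. \<xi> j) \<le> B
                        \<and> (\<forall>j. j \<notin> {1..N} \<longrightarrow> \<xi> j = 0)}"

definition opt_N :: "real \<Rightarrow> real \<Rightarrow> real \<Rightarrow> nat \<Rightarrow> nat \<Rightarrow> (nat \<Rightarrow> real)" where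
  "opt_N p \<gamma> B w N = (THE \<xi>. \<xi> \<in> feasible_N B N \<and>
       (\<forall>\<eta>\<in>feasible_N B N. T_N p \<gamma> B w N \<eta> \<le> T_N p \<gamma> B w N \<xi>))"

definition B_res :: "real \<Rightarrow> real \<Rightarrow> real \<Rightarrow> nat \<Rightarrow> nat \<Rightarrow> real" where
  "B_res p \<gamma> B w N = B - (\<Sum>i=1..N. opt_N p \<gamma> B w N i)"

end

theory Submission
  imports Defs
begin

text \<open>Reverse the entries, \<open>e i = \<xi> (N - i)\<close>, and let \<open>r i = B - (\<xi> 1 + ... + \<xi> (N - i))\<close> be
  the budget left for the last \<open>i\<close> entries, so that \<open>r (i + 1) = r i + e i\<close> and \<open>r N = B\<close>.
  Up to an additive constant and a positive factor, \<open>T_N\<close> is then the concave function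
  \<open>w L (r 0) + (\<Sum>i<N. \<alpha>^i ln (1 + \<gamma> e i) + p \<alpha>^(i+1) w L (r (i + 1)))\<close>, where
  \<open>\<alpha> = 1 / (1 - p)\<close> and \<open>L t = ln (1 + \<gamma> t / w)\<close>. Its KKT conditions can be solved forwards
  from the leftover budget \<open>R = r 0\<close>: the multiplier starts at \<open>m 0 = (w L)' R\<close>, each \<open>e i\<close>
  is the water-filling value \<open>max 0 (\<alpha>^i / m i - 1 / \<gamma>)\<close>, and
  \<open>m (i + 1) = m i + p \<alpha>^(i+1) (w L)' (r (i + 1))\<close>. By concavity, whenever this recursion ends
  with \<open>r N = B\<close> it yields the unique maximiser, so \<open>B_res N = R\<close>. One more step from the same
  \<open>R\<close> overshoots \<open>B\<close>, while the recursion from \<open>0\<close> stays at \<open>0\<close>; the intermediate value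
  theorem then gives a smaller leftover \<open>R' < R\<close> for \<open>N + 1\<close>.\<close>

definition concavity_gap :: "real \<Rightarrow> real \<Rightarrow> real \<Rightarrow> real" where
  "concavity_gap g x e = g * (e - x) / (1 + g * x) - (ln (1 + g * e) - ln (1 + g * x))"

lemma concavity_gap_nonneg:
  assumes "0 < g" "0 \<le> x" "0 \<le> e"
  shows "0 \<le> concavity_gap g x e"
  using ln_diff_le[of "1 + g * e" "1 + g * x"] assms
  by (simp add: concavity_gap_def add_pos_nonneg right_diff_distrib)

lemma concavity_gap_pos:
  assumes "0 < g" "0 \<le> x" "0 \<le> e" "e \<noteq> x"
  shows "0 < concavity_gap g x e"
  using ln_diff_less[of "1 + g * e" "1 + g * x"] assms
  by (simp add: concavity_gap_def add_pos_nonneg right_diff_distrib)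

lemma THE_strict_maximizer:
  assumes "\<xi> \<in> F" "\<And>\<eta>. \<eta> \<in> F \<Longrightarrow> \<eta> \<noteq> \<xi> \<Longrightarrow> f \<eta> < (f \<xi> :: real)"
  shows "(THE \<xi>. \<xi> \<in> F \<and> (\<forall>\<eta>\<in>F. f \<eta> \<le> f \<xi>)) = \<xi>"
  using assms by (intro the_equality) (auto intro: less_imp_le, fastforce)

lemma eq_of_equal_increments:
  fixes S T :: "nat \<Rightarrow> 'a::ab_group_add"
  assumes "\<And>k. i \<le> k \<Longrightarrow> k < N \<Longrightarrow> T (Suc k) - T k = S (Suc k) - S k"
    and "T N = S N" and "i \<le> N"
  shows "T i = S i"
proof -
  have "T N - T i = S N - S i"
    using sum_Suc_diff'[OF \<open>i \<le> N\<close>, of T] sum_Suc_diff'[OF \<open>i \<le> N\<close>, of S] assms(1)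
    by (metis (no_types, lifting) atLeastLessThan_iff sum.cong)
  with \<open>T N = S N\<close> show ?thesis by simp
qed

definition residual :: "real \<Rightarrow> nat \<Rightarrow> (nat \<Rightarrow> real) \<Rightarrow> nat \<Rightarrow> real" where
  "residual B N \<eta> i = B - (\<Sum>j=1..N - i. \<eta> j)"

lemma residual_Suc: "i < N \<Longrightarrow> residual B N \<eta> (Suc i) = residual B N \<eta> i + \<eta> (N - i)"
proof -
  assume "i < N"
  then have "N - i = Suc (N - Suc i)" by simp
  then show ?thesis by (simp add: residual_def)
qed

lemma suminf_eq_sum_reversed:
  fixes f :: "nat \<Rightarrow> 'a::{comm_monoid_add,t2_space}"
  assumes "\<And>i. N \<le> i \<Longrightarrow> f i = 0"
  shows "(\<Sum>i. f i) = (\<Sum>i<N. f (N - Suc i))"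
proof -
  have "(\<Sum>i. f i) = (\<Sum>i<N. f i)"
    using assms by (intro suminf_finite) auto
  then show ?thesis by (simp add: sum.nat_diff_reindex)
qed

locale water_filling =
  fixes p g w :: real
  assumes p_pos: "0 < p" and p_less_1: "p < 1" and g_pos: "0 < g" and w_pos: "0 < w"
begin

definition \<alpha> :: real where "\<alpha> = 1 / (1 - p)"

lemma \<alpha>_pos: "0 < \<alpha>"
  using p_less_1 by (simp add: \<alpha>_def)

lemma \<alpha>_power_Suc: "\<alpha> ^ Suc i * c = \<alpha> ^ i * c + p * \<alpha> ^ Suc i * c"
proof -
  have "\<alpha> = 1 + p * \<alpha>"
    using p_less_1 by (simp add: \<alpha>_def field_simps)
  then have "\<alpha> ^ Suc i * c = \<alpha> ^ i * (1 + p * \<alpha>) * c"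
    by (metis power_Suc2)
  then show ?thesis by (simp add: algebra_simps)
qed

definition slope :: "real \<Rightarrow> real" where
  "slope s = g / (1 + g * s / w)"

lemma slope_pos: "0 \<le> s \<Longrightarrow> 0 < slope s"
  using g_pos w_pos by (simp add: slope_def add_pos_nonneg)

lemma slope_le: "0 \<le> s \<Longrightarrow> slope s \<le> g"
  using g_pos w_pos by (simp add: slope_def divide_le_eq add_pos_nonneg)

lemma slope_less: "0 < s \<Longrightarrow> slope s < g"
  using g_pos w_pos by (simp add: slope_def divide_less_eq add_pos_nonneg)

lemma continuous_on_slope: "continuous_on {0..} slope"
  unfolding slope_def using g_pos w_pos
  by (intro continuous_intros) (auto simp: add_pos_nonneg intro!: order.strict_implies_not_eq[symmetric])

lemma ln_tangent_le_slope:
  assumes "0 \<le> S" "0 \<le> T"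
  shows "w * (ln (1 + g * T / w) - ln (1 + g * S / w)) \<le> slope S * (T - S)"
proof -
  have pos: "0 < 1 + g * S / w" "0 < 1 + g * T / w"
    using assms g_pos w_pos by (simp_all add: add_pos_nonneg)
  have "w * (ln (1 + g * T / w) - ln (1 + g * S / w)) \<le> w * ((g * T / w - g * S / w) / (1 + g * S / w))"
    using mult_left_mono[OF ln_diff_le[OF pos(2) pos(1)], of w] w_pos by simp
  also have "\<dots> = g * (T - S) / (1 + g * S / w)"
  proof -
    have "w * (g * T / w - g * S / w) = g * (T - S)"
      using w_pos by (simp add: field_simps)
    then show ?thesis by (simp only: times_divide_eq_right)
  qed
  also have "\<dots> = slope S * (T - S)"
    by (simp add: slope_def)
  finally show ?thesis .
qed

text \<open>\<open>state R i\<close> is the pair (budget for the last \<open>i\<close> entries, its Lagrange multiplier) of the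
  KKT recursion started from the leftover budget \<open>R\<close>.\<close>

fun state :: "real \<Rightarrow> nat \<Rightarrow> real \<times> real" where
  "state R 0 = (R, slope R)"
| "state R (Suc i) =
    (let s = fst (state R i) + max 0 (\<alpha> ^ i / snd (state R i) - 1 / g)
     in (s, snd (state R i) + p * \<alpha> ^ Suc i * slope s))"

definition budget :: "real \<Rightarrow> nat \<Rightarrow> real" where
  "budget R i = fst (state R i)"

definition multiplier :: "real \<Rightarrow> nat \<Rightarrow> real" where
  "multiplier R i = snd (state R i)"

definition alloc :: "real \<Rightarrow> nat \<Rightarrow> real" where
  "alloc R i = max 0 (\<alpha> ^ i / multiplier R i - 1 / g)"

lemma budget_0 [simp]: "budget R 0 = R"
  and multiplier_0 [simp]: "multiplier R 0 = slope R"
  and budget_Suc [simp]: "budget R (Suc i) = budget R i + alloc R i"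
  and multiplier_Suc [simp]: "multiplier R (Suc i) = multiplier R i + p * \<alpha> ^ Suc i * slope (budget R (Suc i))"
  by (simp_all add: budget_def multiplier_def alloc_def Let_def)

declare state.simps [simp del]

lemma alloc_nonneg: "0 \<le> alloc R i"
  by (simp add: alloc_def)

lemma budget_ge: "R \<le> budget R i"
  by (induction i) (auto intro: order_trans simp: alloc_nonneg)

lemma multiplier_pos: "0 \<le> R \<Longrightarrow> 0 < multiplier R i"
proof (induction i)
  case (Suc i)
  have "0 < p * \<alpha> ^ Suc i * slope (budget R (Suc i))"
    using p_pos \<alpha>_pos slope_pos budget_ge[of R "Suc i"] Suc.prems by force
  with Suc show ?case by simp
qed (simp add: slope_pos)

lemma multiplier_less: "0 < R \<Longrightarrow> multiplier R i < \<alpha> ^ i * g"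
proof (induction i)
  case (Suc i)
  have "p * \<alpha> ^ Suc i * slope (budget R (Suc i)) < p * \<alpha> ^ Suc i * g"
    using p_pos \<alpha>_pos slope_less budget_ge[of R "Suc i"] Suc.prems by simp
  with Suc.IH Suc.prems \<alpha>_power_Suc[of i g] show ?case by simp
qed (simp add: slope_less)

lemma alloc_pos: "0 < R \<Longrightarrow> 0 < alloc R i"
  using multiplier_pos[of R i] multiplier_less[of R i] g_pos
  by (simp add: alloc_def field_simps)

lemma budget_multiplier_at_0: "budget 0 i = 0 \<and> multiplier 0 i = \<alpha> ^ i * g"
proof (induction i)
  case (Suc i)
  then have "alloc 0 i = 0"
    using \<alpha>_pos g_pos by (simp add: alloc_def)
  with Suc \<alpha>_power_Suc[of i g] show ?case by (simp add: slope_def)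
qed (simp add: slope_def)

lemma continuous_on_budget_multiplier:
  "continuous_on {0..} (\<lambda>R. budget R i) \<and> continuous_on {0..} (\<lambda>R. multiplier R i)"
proof (induction i)
  case 0
  then show ?case using continuous_on_slope by (simp add: continuous_on_id)
next
  case (Suc i)
  have "\<forall>R\<in>{0..}. multiplier R i \<noteq> 0"
    using multiplier_pos by (metis atLeast_iff less_irrefl)
  then have "continuous_on {0..} (\<lambda>R. \<alpha> ^ i / multiplier R i)"
    by (intro continuous_on_divide continuous_on_const conjunct2[OF Suc])
  then have "continuous_on {0..} (\<lambda>R. alloc R i)"
    unfolding alloc_def by (intro continuous_on_max continuous_on_diff continuous_on_const)
  then have budget: "continuous_on {0..} (\<lambda>R. budget R (Suc i))"
    using continuous_on_add[OF conjunct1[OF Suc]] by simp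
  have "(\<lambda>R. budget R (Suc i)) ` {0..} \<subseteq> {0..}"
    by (meson atLeast_iff image_subsetI budget_ge order_trans)
  then have "continuous_on {0..} (\<lambda>R. slope (budget R (Suc i)))"
    by (rule continuous_on_compose2[OF continuous_on_slope budget])
  then have "continuous_on {0..} (\<lambda>R. multiplier R i + p * \<alpha> ^ Suc i * slope (budget R (Suc i)))"
    by (intro continuous_on_add conjunct2[OF Suc] continuous_on_mult_left)
  with budget show ?case
    by (simp only: multiplier_Suc)
qed

lemma budget_root:
  assumes "0 \<le> B" "0 \<le> c" "B \<le> budget c n"
  obtains R where "0 \<le> R" "R \<le> c" "budget R n = B"
proof -
  have "continuous_on {0..c} (\<lambda>R. budget R n)"
    by (rule continuous_on_subset[OF conjunct1[OF continuous_on_budget_multiplier]]) auto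
  moreover have "budget 0 n \<le> B"
    using budget_multiplier_at_0 \<open>0 \<le> B\<close> by simp
  ultimately have "\<exists>R\<ge>0. R \<le> c \<and> budget R n = B"
    using assms by (intro IVT')
  with that show ?thesis by blast
qed

text \<open>The KKT condition of stage \<open>i\<close>: \<open>\<alpha>\<^sup>i g / (1 + g x) = multiplier R i\<close> where the
  allocation \<open>x\<close> is positive and \<open>\<le>\<close> where it is zero, combined into one inequality.\<close>

lemma alloc_stationary:
  assumes "0 \<le> R" "0 \<le> e"
  shows "\<alpha> ^ i * g * (e - alloc R i) / (1 + g * alloc R i) \<le> multiplier R i * (e - alloc R i)"
proof (cases "0 < \<alpha> ^ i / multiplier R i - 1 / g")
  case True
  then have "alloc R i = \<alpha> ^ i / multiplier R i - 1 / g"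
    by (simp add: alloc_def)
  then have "1 + g * alloc R i = g * \<alpha> ^ i / multiplier R i"
    using g_pos multiplier_pos[OF \<open>0 \<le> R\<close>, of i] by (simp add: field_simps)
  then have "\<alpha> ^ i * g / (1 + g * alloc R i) = multiplier R i"
    using g_pos multiplier_pos[OF \<open>0 \<le> R\<close>, of i] \<alpha>_pos by simp
  then show ?thesis by (metis times_divide_eq_left order.refl)
next
  case False
  then have "alloc R i = 0" and "\<alpha> ^ i * g \<le> multiplier R i"
    using g_pos multiplier_pos[OF \<open>0 \<le> R\<close>, of i] by (simp_all add: alloc_def field_simps)
  then show ?thesis using mult_right_mono[OF _ \<open>0 \<le> e\<close>] by simp
qed

definition objective :: "nat \<Rightarrow> (nat \<Rightarrow> real) \<Rightarrow> (nat \<Rightarrow> real) \<Rightarrow> real" where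
  "objective n e T = w * ln (1 + g * T 0 / w)
     + (\<Sum>i<n. \<alpha> ^ i * ln (1 + g * e i) + p * \<alpha> ^ Suc i * w * ln (1 + g * T (Suc i) / w))"

lemma objective_Suc:
  "objective (Suc n) e T = objective n e T
     + \<alpha> ^ n * ln (1 + g * e n) + p * \<alpha> ^ Suc n * w * ln (1 + g * T (Suc n) / w)"
  by (simp add: objective_def)

lemma objective_cong:
  "(\<And>i. i < n \<Longrightarrow> e i = e' i) \<Longrightarrow> (\<And>i. i \<le> n \<Longrightarrow> T i = T' i) \<Longrightarrow>
    objective n e T = objective n e' T'"
  unfolding objective_def by (intro arg_cong2[where f = "(+)"] sum.cong) auto

text \<open>Sufficiency of the KKT conditions, by induction over the stages: \<open>multiplier R n\<close> prices
  the budget \<open>T n\<close> still available, and the tangent-line inequalities of the two concave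
  terms of each stage are paid for by the multiplier increments.\<close>

lemma objective_le_water_filling:
  assumes "0 \<le> R" "0 \<le> T 0" "\<And>i. i < n \<Longrightarrow> 0 \<le> e i \<and> T (Suc i) = T i + e i"
  shows "objective n e T + (\<Sum>i<n. \<alpha> ^ i * concavity_gap g (alloc R i) (e i))
    \<le> objective n (alloc R) (budget R) + multiplier R n * (T n - budget R n)"
  using assms(3)
proof (induction n)
  case 0
  show ?case
    using ln_tangent_le_slope[OF _ \<open>0 \<le> T 0\<close>, of R] \<open>0 \<le> R\<close>
    by (simp add: objective_def algebra_simps)
next
  case (Suc n)
  let ?x = "alloc R n" and ?S = "budget R (Suc n)"
  note step = Suc.prems
  have T_nonneg: "0 \<le> T i" if "i \<le> Suc n" for i
    using that by (induction i) (use \<open>0 \<le> T 0\<close> step in force)+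
  have e: "0 \<le> e n" and T: "T (Suc n) = T n + e n"
    using step by auto
  have stage: "\<alpha> ^ n * ln (1 + g * e n) - \<alpha> ^ n * ln (1 + g * ?x) + \<alpha> ^ n * concavity_gap g ?x (e n)
      \<le> multiplier R n * (e n - ?x)"
    using alloc_stationary[OF \<open>0 \<le> R\<close> e, of n] by (simp add: concavity_gap_def algebra_simps)
  have "p * \<alpha> ^ Suc n * (w * (ln (1 + g * T (Suc n) / w) - ln (1 + g * ?S / w)))
      \<le> p * \<alpha> ^ Suc n * (slope ?S * (T (Suc n) - ?S))"
    using ln_tangent_le_slope[OF _ T_nonneg, of ?S "Suc n"] budget_ge[of R "Suc n"] \<open>0 \<le> R\<close>
      p_pos \<alpha>_pos by (intro mult_left_mono) auto
  then have residual: "p * \<alpha> ^ Suc n * w * ln (1 + g * T (Suc n) / w)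
      - p * \<alpha> ^ Suc n * w * ln (1 + g * ?S / w) \<le> p * \<alpha> ^ Suc n * (slope ?S * (T (Suc n) - ?S))"
    by (simp add: algebra_simps)
  have multiplier_step: "multiplier R (Suc n) * (T (Suc n) - ?S) = multiplier R n * (T n - budget R n)
      + multiplier R n * (e n - ?x) + p * \<alpha> ^ Suc n * (slope ?S * (T (Suc n) - ?S))"
    using T by (simp add: algebra_simps)
  have "objective n e T + (\<Sum>i<n. \<alpha> ^ i * concavity_gap g (alloc R i) (e i))
    \<le> objective n (alloc R) (budget R) + multiplier R n * (T n - budget R n)"
    using Suc.IH step by auto
  with stage residual multiplier_step show ?case
    unfolding objective_Suc sum.lessThan_Suc by linarith
qed

lemma objective_less_water_filling:
  assumes "0 \<le> R" "0 \<le> T 0" "\<And>i. i < n \<Longrightarrow> 0 \<le> e i \<and> T (Suc i) = T i + e i"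
    and "T n = budget R n" and "i < n" "e i \<noteq> alloc R i"
  shows "objective n e T < objective n (alloc R) (budget R)"
proof -
  have "0 < (\<Sum>i<n. \<alpha> ^ i * concavity_gap g (alloc R i) (e i))"
  proof (rule sum_pos2)
    show "0 < \<alpha> ^ i * concavity_gap g (alloc R i) (e i)"
      using concavity_gap_pos[OF g_pos alloc_nonneg] assms(3,5,6) \<alpha>_pos by simp
    show "0 \<le> \<alpha> ^ k * concavity_gap g (alloc R k) (e k)" if "k \<in> {..<n}" for k
      using concavity_gap_nonneg[OF g_pos alloc_nonneg] assms(3) that \<alpha>_pos by simp
  qed (use \<open>i < n\<close> in auto)
  moreover have "objective n e T + (\<Sum>i<n. \<alpha> ^ i * concavity_gap g (alloc R i) (e i))
    \<le> objective n (alloc R) (budget R) + multiplier R n * (T n - budget R n)"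
    using assms(1-3) by (rule objective_le_water_filling)
  ultimately show ?thesis
    using \<open>T n = budget R n\<close> by simp
qed

lemma objective_eq:
  "objective n e T = (1 - p) * w * ln (1 + g * T 0 / w)
     + (\<Sum>i<n. \<alpha> ^ i * ln (1 + g * e i) + p * \<alpha> ^ i * w * ln (1 + g * T i / w))
     + p * \<alpha> ^ n * w * ln (1 + g * T n / w)"
proof (induction n)
  case 0
  show ?case by (simp add: objective_def algebra_simps)
next
  case (Suc n)
  then show ?case by (simp add: objective_Suc algebra_simps)
qed

definition allocation :: "real \<Rightarrow> nat \<Rightarrow> nat \<Rightarrow> real" where
  "allocation R N j = (if j \<in> {1..N} then alloc R (N - j) else 0)"

lemma residual_allocation:
  assumes "budget R N = B" "i \<le> N"
  shows "residual B N (allocation R N) i = budget R i"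
proof (rule eq_of_equal_increments[OF _ _ \<open>i \<le> N\<close>])
  show "residual B N (allocation R N) (Suc k) - residual B N (allocation R N) k
      = budget R (Suc k) - budget R k" if "k < N" for k
    using that by (simp add: residual_Suc allocation_def)
  show "residual B N (allocation R N) N = budget R N"
    by (simp add: residual_def \<open>budget R N = B\<close>)
qed

lemma allocation_feasible:
  assumes "0 \<le> R" "budget R N = B"
  shows "allocation R N \<in> feasible_N B N"
  using residual_allocation[OF \<open>budget R N = B\<close>, of 0] \<open>0 \<le> R\<close>
  by (auto simp: feasible_N_def allocation_def alloc_nonneg residual_def)

end

locale allocation_problem = water_filling p g "real w" for p g :: real and w :: nat
begin

lemma one_le_w: "1 \<le> w"
  using w_pos by simp

lemma power_one_minus_p:
  assumes "i < N"
  shows "(1 - p) ^ (N - Suc i + 1 + w - 1) = (1 - p) ^ (N + w - 1) * \<alpha> ^ i"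
proof -
  have "N + w - 1 = (N - Suc i + 1 + w - 1) + i"
    using assms one_le_w by simp
  then have "(1 - p) ^ (N + w - 1) * \<alpha> ^ i = (1 - p) ^ (N - Suc i + 1 + w - 1) * ((1 - p) * \<alpha>) ^ i"
    by (metis power_add power_mult_distrib mult.assoc)
  moreover have "(1 - p) * \<alpha> = 1"
    using p_less_1 by (simp add: \<alpha>_def)
  ultimately show ?thesis by simp
qed

lemma allocation_terms:
  assumes "\<forall>j. j \<notin> {1..N} \<longrightarrow> \<eta> j = 0"
  shows "(\<Sum>i. p * (1 - p) ^ (i + 1 + w - 1) * (1 / 2) * log 2 (1 + g * \<eta> (i + 1)))
    = p * (1 - p) ^ (N + w - 1) / (2 * ln 2) * (\<Sum>i<N. \<alpha> ^ i * ln (1 + g * \<eta> (N - i)))"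
proof -
  have "(\<Sum>i. p * (1 - p) ^ (i + 1 + w - 1) * (1 / 2) * log 2 (1 + g * \<eta> (i + 1)))
    = (\<Sum>i<N. p * (1 - p) ^ (N - Suc i + 1 + w - 1) * (1 / 2) * log 2 (1 + g * \<eta> (N - Suc i + 1)))"
    by (rule suminf_eq_sum_reversed) (simp add: assms)
  also have "\<dots> = (\<Sum>i<N. p * (1 - p) ^ (N + w - 1) / (2 * ln 2) * (\<alpha> ^ i * ln (1 + g * \<eta> (N - i))))"
    by (intro sum.cong refl, subst power_one_minus_p) (auto simp: Suc_diff_Suc log_def)
  finally show ?thesis by (simp add: sum_distrib_left)
qed

lemma residual_terms_tail:
  assumes "\<forall>j. j \<notin> {1..N} \<longrightarrow> \<eta> j = 0"
  shows "(\<lambda>i. p\<^sup>2 * (1 - p) ^ (i + N + 1 + w - 1) * (real w / 2)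
            * log 2 (1 + g * (B - (\<Sum>j=1..i + N + 1. \<eta> j)) / real w))
    sums (p * (1 - p) ^ (N + w - 1) / (2 * ln 2) * ((1 - p) * w * ln (1 + g * residual B N \<eta> 0 / w)))"
proof -
  define c where "c = p\<^sup>2 * (1 - p) ^ (N + w) * (real w / 2) * log 2 (1 + g * residual B N \<eta> 0 / w)"
  have shift: "p\<^sup>2 * (1 - p) ^ (i + N + 1 + w - 1) * (real w / 2)
      * log 2 (1 + g * (B - (\<Sum>j=1..i + N + 1. \<eta> j)) / real w) = c * (1 - p) ^ i" for i
  proof -
    have "(\<Sum>j=1..i + N + 1. \<eta> j) = (\<Sum>j=1..N. \<eta> j)"
      using assms by (intro sum.mono_neutral_right) auto
    moreover have "i + N + 1 + w - 1 = i + (N + w)"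
      using one_le_w by simp
    ultimately show ?thesis
      by (simp add: c_def residual_def power_add)
  qed
  have "(\<lambda>i. c * (1 - p) ^ i) sums (c / p)"
    using sums_mult[OF geometric_sums[of "1 - p"], of c] p_pos p_less_1 by simp
  moreover have "c / p = p * (1 - p) ^ (N + w - 1) / (2 * ln 2) * ((1 - p) * w * ln (1 + g * residual B N \<eta> 0 / w))"
  proof -
    have "(1 - p) ^ (N + w) = (1 - p) ^ (N + w - 1) * (1 - p)"
      using one_le_w by (metis add_gr_0 less_le_trans power_minus_mult zero_less_one)
    then show ?thesis
      using p_pos by (simp add: c_def log_def power2_eq_square)
  qed
  ultimately show ?thesis
    by (simp only: shift)
qed

lemma residual_terms:
  assumes "\<forall>j. j \<notin> {1..N} \<longrightarrow> \<eta> j = 0"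
  shows "(\<Sum>i. p\<^sup>2 * (1 - p) ^ (i + 1 + w - 1) * (real w / 2)
            * log 2 (1 + g * (B - (\<Sum>j=1..i + 1. \<eta> j)) / real w))
    = p * (1 - p) ^ (N + w - 1) / (2 * ln 2) * ((1 - p) * w * ln (1 + g * residual B N \<eta> 0 / w)
        + (\<Sum>i<N. p * \<alpha> ^ i * w * ln (1 + g * residual B N \<eta> i / w)))"
    (is "suminf ?f = ?K * (?tail + ?head)")
proof -
  have tail: "(\<lambda>i. ?f (i + N)) sums (?K * ?tail)"
    using assms by (rule residual_terms_tail)
  then have "summable ?f"
    using summable_iff_shift[of ?f N] sums_summable by blast
  then have "suminf ?f = (\<Sum>i. ?f (i + N)) + (\<Sum>i<N. ?f i)"
    by (rule suminf_split_initial_segment)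
  also have "(\<Sum>i. ?f (i + N)) = ?K * ?tail"
    using tail by (rule sums_unique[symmetric])
  also have "(\<Sum>i<N. ?f i) = (\<Sum>i<N. ?f (N - Suc i))"
    by (rule sum.nat_diff_reindex[symmetric])
  also have "\<dots> = (\<Sum>i<N. ?K * (p * \<alpha> ^ i * w * ln (1 + g * residual B N \<eta> i / w)))"
    by (intro sum.cong refl, subst power_one_minus_p)
      (auto simp: Suc_diff_Suc residual_def log_def power2_eq_square)
  finally show ?thesis by (simp add: sum_distrib_left algebra_simps)
qed

lemma T_inf_eq:
  assumes "\<forall>j. j \<notin> {1..N} \<longrightarrow> \<eta> j = 0"
  shows "T_inf p g B w \<eta> = (\<Sum>k=1..w. p\<^sup>2 * (1 - p) ^ (k - 1) * (real k / 2) * log 2 (1 + g * B / real k))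
    + p * (1 - p) ^ (N + w - 1) / (2 * ln 2) * (\<Sum>i<N. \<alpha> ^ i * ln (1 + g * \<eta> (N - i)))
    + p * (1 - p) ^ (N + w - 1) / (2 * ln 2) * ((1 - p) * w * ln (1 + g * residual B N \<eta> 0 / w)
        + (\<Sum>i<N. p * \<alpha> ^ i * w * ln (1 + g * residual B N \<eta> i / w)))"
  unfolding T_inf_def
  by (subst allocation_terms[OF assms], subst residual_terms[OF assms]) (rule refl)

lemma T_N_eq_objective:
  assumes "\<forall>j. j \<notin> {1..N} \<longrightarrow> \<eta> j = 0"
  shows "T_N p g B w N \<eta> = (\<Sum>k=1..w. p\<^sup>2 * (1 - p) ^ (k - 1) * (real k / 2) * log 2 (1 + g * B / real k))
    + p * (1 - p) ^ (N + w - 1) / (2 * ln 2)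
      * (objective N (\<lambda>i. \<eta> (N - i)) (residual B N \<eta>) - p * \<alpha> ^ N * w * ln (1 + g * B / w))"
proof -
  have "(\<lambda>j. if 1 \<le> j \<and> j \<le> N then \<eta> j else 0) = \<eta>"
    using assms by fastforce
  then have "T_N p g B w N \<eta> = T_inf p g B w \<eta>"
    by (simp add: T_N_def)
  then show ?thesis
    unfolding T_inf_eq[OF assms] by (simp add: objective_eq residual_def sum.distrib algebra_simps)
qed

lemma T_N_less_iff:
  assumes "\<forall>j. j \<notin> {1..N} \<longrightarrow> \<eta> j = 0" "\<forall>j. j \<notin> {1..N} \<longrightarrow> \<zeta> j = 0"
  shows "T_N p g B w N \<eta> < T_N p g B w N \<zeta> \<longleftrightarrow>
    objective N (\<lambda>i. \<eta> (N - i)) (residual B N \<eta>) < objective N (\<lambda>i. \<zeta> (N - i)) (residual B N \<zeta>)"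
proof -
  have "0 < p * (1 - p) ^ (N + w - 1) / (2 * ln 2)"
    using p_pos p_less_1 by simp
  then show ?thesis
    unfolding T_N_eq_objective[OF assms(1)] T_N_eq_objective[OF assms(2)]
    by (simp only: add_less_cancel_left mult_less_cancel_left_pos) simp
qed

lemma T_N_less_allocation:
  assumes "0 \<le> R" "budget R N = B" and feasible: "\<eta> \<in> feasible_N B N"
    and "\<eta> \<noteq> allocation R N"
  shows "T_N p g B w N \<eta> < T_N p g B w N (allocation R N)"
proof -
  have \<eta>_vanishes: "\<forall>j. j \<notin> {1..N} \<longrightarrow> \<eta> j = 0"
    using feasible by (simp add: feasible_N_def)
  have \<xi>_vanishes: "\<forall>j. j \<notin> {1..N} \<longrightarrow> allocation R N j = 0"
    by (simp add: allocation_def)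
  obtain j where "\<eta> j \<noteq> allocation R N j"
    using \<open>\<eta> \<noteq> allocation R N\<close> by (auto simp: fun_eq_iff)
  then have j: "j \<in> {1..N}" "\<eta> j \<noteq> allocation R N j"
    using \<eta>_vanishes \<xi>_vanishes by metis+
  have "objective N (\<lambda>i. \<eta> (N - i)) (residual B N \<eta>) < objective N (alloc R) (budget R)"
  proof (rule objective_less_water_filling[OF \<open>0 \<le> R\<close>])
    show "0 \<le> residual B N \<eta> 0"
      using feasible by (simp add: feasible_N_def residual_def)
    show "0 \<le> \<eta> (N - i) \<and> residual B N \<eta> (Suc i) = residual B N \<eta> i + \<eta> (N - i)" if "i < N" for i
      using feasible that by (simp add: feasible_N_def residual_Suc)
    show "residual B N \<eta> N = budget R N"
      by (simp add: residual_def \<open>budget R N = B\<close>)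
    show "N - j < N" and "\<eta> (N - (N - j)) \<noteq> alloc R (N - j)"
      using j by (auto simp: allocation_def)
  qed
  also have "\<dots> = objective N (\<lambda>i. allocation R N (N - i)) (residual B N (allocation R N))"
    using residual_allocation[OF \<open>budget R N = B\<close>]
    by (intro objective_cong) (simp_all add: allocation_def)
  finally show ?thesis
    using T_N_less_iff[OF \<eta>_vanishes \<xi>_vanishes] by simp
qed

lemma B_res_eq:
  assumes "0 \<le> R" "budget R N = B"
  shows "B_res p g B w N = R"
proof -
  have "opt_N p g B w N = allocation R N"
    unfolding opt_N_def using allocation_feasible[OF assms] T_N_less_allocation[OF assms]
    by (rule THE_strict_maximizer[where f = "T_N p g B w N"])
  then show ?thesis
    using residual_allocation[OF \<open>budget R N = B\<close>, of 0] by (simp add: B_res_def residual_def)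
qed

end

theorem lemma8:
  fixes p \<gamma> B :: real and w :: nat
  assumes "0 < p" "p < 1" "0 < \<gamma>" "0 < B" "1 \<le> w"
  shows "\<forall>N\<ge>1. B_res p \<gamma> B w (Suc N) < B_res p \<gamma> B w N"
proof (intro allI impI)
  fix N :: nat
  interpret allocation_problem p \<gamma> w
    using assms by unfold_locales auto
  obtain R where R: "0 \<le> R" "R \<le> B" "budget R N = B"
    by (rule budget_root[of B B N]) (use \<open>0 < B\<close> budget_ge in auto)
  have "R \<noteq> 0"
    using R(3) budget_multiplier_at_0[of N] \<open>0 < B\<close> by auto
  with R(1) have "0 < R" by simp
  then have "B < budget R (Suc N)"
    using alloc_pos[of R N] R(3) by simp
  then obtain R' where R': "0 \<le> R'" "R' \<le> R" "budget R' (Suc N) = B"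
    using budget_root[of B R "Suc N"] \<open>0 < B\<close> \<open>0 < R\<close> by auto
  have "R' \<noteq> R"
    using R'(3) \<open>B < budget R (Suc N)\<close> by auto
  with R'(2) have "R' < R" by simp
  then show "B_res p \<gamma> B w (Suc N) < B_res p \<gamma> B w N"
    using B_res_eq[OF R(1,3)] B_res_eq[OF R'(1,3)] by simp
qed

end
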